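(* Consider Case 3 of the problem described in the context (conductivity $k$ unknown; $\rho,c,\ell>0$, $T_m$, $T_0>T_m$, $q_0>0$ given), whose solution for $0<\alpha<1$ and any data is $k_\alpha=\frac{q_0^2\Gamma^2(1-\frac{\alpha}{2})}{\rho c(T_0-T_m)^2}[1-W(-\xi_\alpha;-\frac{\alpha}{2},1)]^2$, $T_\alpha(x,t)=T_0-\frac{T_0-T_m}{1-W(-\xi_\alpha;-\frac{\alpha}{2},1)}[1-W(-\frac{x}{\lambda_\alpha t^{\alpha/2}};-\frac{\alpha}{2},1)]$, $s_\alpha(t)=\lambda_\alpha\xi_\alpha t^{\alpha/2}$, $\lambda_\alpha=\frac{q_0\Gamma(1-\frac{\alpha}{2})}{\rho c(T_0-T_m)}[1-W(-\xi_\alpha;-\frac{\alpha}{2},1)]$, with $\xi_\alpha>0$ the unique solution of $\frac{x[1-W(-x;-\frac{\alpha}{2},1)]}{M_{\alpha/2}(x)}=\frac{c(T_0-T_m)\Gamma(1-\frac{\alpha}{2})}{\ell\Gamma(1+\frac{\alpha}{2})}$, $x>0$. Then, for any data, as $\alpha\to1^-$ this solution coincides with the following one (the classical case $\alpha=1$): $$s_1(t)=2\lambda_1\mu_1t^{1/2},\quad T_1(x,t)=T_0-\frac{T_0-T_m}{\operatorname{erf}(\mu_1)}\operatorname{erf}\left(\frac{x}{2\lambda_1t^{1/2}}\right),$$ $$k_1=\frac{\pi q_0^2}{\rho c(T_0-T_m)^2}\operatorname{erf}^2(\mu_1),\quad \lambda_1=\frac{q_0}{\rho\ell}\,\frac{\exp(-\mu_1^2)}{\mu_1},$$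 where $\mu_1>0$ is the unique solution of $$x\exp(x^2)\operatorname{erf}(x)=\frac{c(T_0-T_m)}{\ell\sqrt{\pi}},\quad x>0.$$
   Context: For $0<\alpha<1$ the Caputo derivative is $D^\alpha f(t)=\frac{1}{\Gamma(1-\alpha)}\int_0^t \frac{f'(\tau)}{(t-\tau)^\alpha}d\tau$, and $D^1f=f'$. The Wright function is $W(z;a,b)=\sum_{n\ge0}\frac{z^n}{n!\,\Gamma(na+b)}$ ($a>-1$, $b\in\mathbb{R}$); the Mainardi function is $M_\nu(z)=W(-z;-\nu,1-\nu)$. $\operatorname{erf}(x)=\frac{2}{\sqrt\pi}\int_0^x e^{-u^2}du$. The problem (for $0<\alpha\le 1$): with positive constants $\rho,k,c,\ell$, $\lambda^2=k/(\rho c)$, melting temperature $T_m$, $T_0>T_m$, $q_0>0$, find $s(t)$, $T(x,t)$ and the unknown coefficient with $D^\alpha T=\lambda^2T_{xx}$ in $0<x<s(t)$, $t>0$; $s(0)=0$; $T(x,0)=T(+\infty,t)=T_m$; $T(s(t),t)=T_m$; $-kT_x(s(t),t)=\rho\ell D^\alpha s(t)$; $T(0,t)=T_0$; $kT_x(0,t)=-q_0/t^{\alpha/2}$ for $t>0$. *)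

theory Defs
  imports "HOL-Analysis.Analysis"
begin

text \<open>Wright function W(z;a,b) = sum_n z^n / (n! Gamma(n a + b)); 1/Gamma is rGamma
  (which is 0 at the poles of Gamma, as usual).\<close>
definition Wright :: "real \<Rightarrow> real \<Rightarrow> real \<Rightarrow> real" where
  "Wright z a b = (\<Sum>n. z ^ n / fact n * rGamma (real n * a + b))"

definition Mainardi :: "real \<Rightarrow> real \<Rightarrow> real" where
  "Mainardi nu z = Wright (- z) (- nu) (1 - nu)"

definition erf :: "real \<Rightarrow> real" where
  "erf x = 2 / sqrt pi *
     (if 0 \<le> x then integral {0..x} (\<lambda>u. exp (- (u\<^sup>2)))
      else - integral {x..0} (\<lambda>u. exp (- (u\<^sup>2))))"

end

theory Submission
  imports Defs
begin

text \<open>At \<open>\<alpha> = 1\<close> the Wright functions reduce to Gaussian quantities: comparing power series gives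
  \<open>M\<^sub>1\<^sub>/\<^sub>2(x) = exp (-x\<^sup>2/4) / sqrt pi\<close> (the odd coefficients vanish at the poles of \<open>\<Gamma>\<close>) and
  \<open>d/dx W(-x; -1/2, 1) = - M\<^sub>1\<^sub>/\<^sub>2(x)\<close>, hence \<open>W(-x; -1/2, 1) = 1 - erf (x/2)\<close>.
  The Wright series converges uniformly for bounded \<open>z\<close>, \<open>a \<in> [-1/2, 0]\<close>, \<open>b \<in> [1/2, 1]\<close>, so \<open>W\<close> is
  jointly continuous there. Thus, as \<open>\<alpha> \<rightarrow> 1\<^sup>-\<close>, the equation for \<open>\<xi>\<^sub>\<alpha>\<close> converges to
  \<open>x erf (x/2) = 2 c (T\<^sub>0 - T\<^sub>m) / \<ell> \<cdot> exp (-x\<^sup>2/4) / sqrt pi\<close>, whose two sides cross exactly once, at \<open>x = 2\<mu>\<^sub>1\<close>;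
  the intermediate value theorem together with the uniqueness of \<open>\<xi>\<^sub>\<alpha>\<close> forces \<open>\<xi>\<^sub>\<alpha> \<rightarrow> 2\<mu>\<^sub>1\<close>.
  Everything else is a continuous expression in \<open>\<xi>\<^sub>\<alpha>\<close>, \<open>\<Gamma>(1 - \<alpha>/2)\<close> and \<open>t\<^sup>\<alpha>\<^sup>/\<^sup>2\<close>.\<close>

section \<open>Continuity of the Wright function\<close>

lemma rGamma_bounded_on_unit_interval: "\<exists>C\<ge>0. \<forall>y\<in>{0..1::real}. \<bar>rGamma y\<bar> \<le> C"
proof -
  have "compact (rGamma ` {0..1::real})"
    by (intro compact_continuous_image continuous_on_rGamma) auto
  then obtain B where "\<forall>x\<in>rGamma ` {0..1::real}. norm x \<le> B"
    using compact_imp_bounded bounded_iff by metis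
  then show ?thesis by (intro exI[of _ "max B 0"]) auto
qed

lemma abs_rGamma_le_fact:
  assumes "C \<ge> 0" "\<forall>y\<in>{0..1::real}. \<bar>rGamma y\<bar> \<le> C" "- real m \<le> y" "y \<le> 1"
  shows "\<bar>rGamma y\<bar> \<le> C * fact m"
  using assms(3,4)
proof (induction m arbitrary: y)
  case 0
  then show ?case using assms(2) by auto
next
  case (Suc m)
  show ?case
  proof (cases "y \<ge> 0")
    case True
    then have "\<bar>rGamma y\<bar> \<le> C" using assms(2) Suc.prems by auto
    also have "C \<le> C * fact (Suc m)"
      using mult_left_mono[OF fact_ge_1[of "Suc m"] assms(1)] by simp
    finally show ?thesis .
  next
    case False
    have "\<bar>y\<bar> * \<bar>rGamma (y + 1)\<bar> \<le> real (Suc m) * (C * fact m)"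
      using Suc.IH[of "y + 1"] Suc.prems False assms(1) by (intro mult_mono) auto
    moreover have "rGamma y = y * rGamma (y + 1)" using rGamma_plus1[of y] by simp
    ultimately show ?thesis by (simp add: abs_mult algebra_simps)
  qed
qed

lemma fact_div_2_le_sqrt_fact: "(fact (n div 2) :: real) \<le> sqrt (fact n)"
proof -
  define m where "m = n div 2"
  have "fact m * fact m * real (2 * m choose m) = fact (2 * m)"
    using binomial_fact_lemma[of m "2 * m"]
    by (metis mult_2 add_diff_cancel_left' le_add1 of_nat_fact of_nat_mult)
  moreover have "real (2 * m choose m) \<ge> 1" by (simp add: Suc_leI)
  ultimately have "fact m * fact m \<le> (fact (2 * m) :: real)"
    by (metis mult_le_cancel_left1 mult.commute fact_gt_zero mult_pos_pos not_le order_less_le)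
  also have "(fact (2 * m) :: real) \<le> fact n"
    using fact_mono[of "2 * m" n] unfolding m_def by auto
  finally have "(fact m)\<^sup>2 \<le> (fact n :: real)" by (simp add: power2_eq_square)
  then show ?thesis unfolding m_def by (simp add: real_le_rsqrt)
qed

lemma summable_power_div_sqrt_fact: "summable (\<lambda>n. K ^ n / sqrt (fact n) :: real)"
proof (rule summable_ratio_test[where c = "1/2" and N = "nat \<lceil>4 * K\<^sup>2\<rceil>"])
  fix n assume "n \<ge> nat \<lceil>4 * K\<^sup>2\<rceil>"
  then have "(2 * \<bar>K\<bar>)\<^sup>2 \<le> real (Suc n)" by (simp add: power_mult_distrib)
  then have "\<bar>K\<bar> / sqrt (real (Suc n)) \<le> 1/2" by (simp add: real_le_rsqrt divide_simps)
  moreover have "norm (K ^ Suc n / sqrt (fact (Suc n)))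
      = \<bar>K\<bar> / sqrt (real (Suc n)) * norm (K ^ n / sqrt (fact n))"
    by (simp add: real_sqrt_mult abs_mult)
  ultimately show "norm (K ^ Suc n / sqrt (fact (Suc n))) \<le> 1/2 * norm (K ^ n / sqrt (fact n))"
    by (metis mult_right_mono norm_ge_zero)
qed simp

definition Wright_domain :: "real \<Rightarrow> (real \<times> real \<times> real) set" where
  "Wright_domain K = {-K..K} \<times> {-1/2..0} \<times> {1/2..1}"

text \<open>For \<open>-1/2 \<le> a \<le> 0\<close> and \<open>1/2 \<le> b \<le> 1\<close> the argument \<open>n a + b\<close> of \<open>rGamma\<close> stays
  above \<open>-n/2\<close>, so the factor \<open>1/\<Gamma>\<close> grows at most like \<open>(n div 2)! \<le> sqrt (n!)\<close>.\<close>
lemma Wright_term_bound: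
  assumes C: "C \<ge> 0" "\<forall>y\<in>{0..1::real}. \<bar>rGamma y\<bar> \<le> C" and "(z, a, b) \<in> Wright_domain K"
  shows "\<bar>z ^ n / fact n * rGamma (real n * a + b)\<bar> \<le> C * (K ^ n / sqrt (fact n))"
proof -
  have z: "\<bar>z\<bar> \<le> K" and a: "-1/2 \<le> a" "a \<le> 0" and b: "1/2 \<le> b" "b \<le> 1"
    using assms(3) by (auto simp: Wright_domain_def)
  have "real n * (-1/2) \<le> real n * a" using a by (intro mult_left_mono) auto
  then have lower: "- real (n div 2) \<le> real n * a + b" using b by linarith
  have upper: "real n * a + b \<le> 1" using a b by (smt (verit) mult_nonneg_nonpos of_nat_0_le_iff)
  have "\<bar>z ^ n / fact n * rGamma (real n * a + b)\<bar> = \<bar>z\<bar> ^ n * \<bar>rGamma (real n * a + b)\<bar> / fact n"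
    by (simp add: abs_mult power_abs)
  also have "\<dots> \<le> K ^ n * (C * fact (n div 2)) / fact n"
    using abs_rGamma_le_fact[OF C lower upper] z
    by (intro divide_right_mono mult_mono power_mono) auto
  also have "\<dots> \<le> K ^ n * (C * sqrt (fact n)) / fact n"
    using z C by (intro divide_right_mono mult_left_mono fact_div_2_le_sqrt_fact) auto
  also have "\<dots> = C * (K ^ n / sqrt (fact n))"
  proof -
    have sq: "sqrt (fact n) * sqrt (fact n) = (fact n :: real)" by simp
    show ?thesis by (subst (2) sq[symmetric]) (simp add: field_simps)
  qed
  finally show ?thesis .
qed

lemma continuous_on_Wright:
  "continuous_on (Wright_domain K) (\<lambda>(z, a, b). Wright z a b)"
proof -
  obtain C where C: "C \<ge> 0" "\<forall>y\<in>{0..1::real}. \<bar>rGamma y\<bar> \<le> C"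
    using rGamma_bounded_on_unit_interval by blast
  define f where "f n = (\<lambda>(z, a, b). z ^ n / fact n * rGamma (real n * a + b))" for n
  have "uniform_limit (Wright_domain K) (\<lambda>N p. \<Sum>n<N. f n p) (\<lambda>p. \<Sum>n. f n p) sequentially"
  proof (rule Weierstrass_m_test)
    show "summable (\<lambda>n. C * (K ^ n / sqrt (fact n)))"
      by (intro summable_mult summable_power_div_sqrt_fact)
  qed (use Wright_term_bound[OF C] in \<open>auto simp: f_def\<close>)
  then have "continuous_on (Wright_domain K) (\<lambda>p. \<Sum>n. f n p)"
  proof (rule uniform_limit_theorem[rotated])
    show "\<forall>\<^sub>F N in sequentially. continuous_on (Wright_domain K) (\<lambda>p. \<Sum>n<N. f n p)"
      unfolding f_def case_prod_unfold
      by (intro always_eventually allI continuous_intros continuous_on_compose2[OF continuous_on_rGamma])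
        auto
  qed simp
  then show ?thesis by (simp add: Wright_def f_def case_prod_unfold)
qed

lemma tendsto_Wright:
  assumes "(z \<longlongrightarrow> z0) F" "(a \<longlongrightarrow> a0) F" "(b \<longlongrightarrow> b0) F"
    and "(z0, a0, b0) \<in> Wright_domain K" "eventually (\<lambda>x. (z x, a x, b x) \<in> Wright_domain K) F"
  shows "((\<lambda>x. Wright (z x) (a x) (b x)) \<longlongrightarrow> Wright z0 a0 b0) F"
  using continuous_on_tendsto_compose[OF continuous_on_Wright tendsto_Pair[OF assms(1) tendsto_Pair[OF assms(2,3)]]]
    assms(4,5) by simp

section \<open>The Wright functions at \<open>\<alpha> = 1\<close>\<close>

definition Wright_half_coeff :: "real \<Rightarrow> nat \<Rightarrow> real" where
  "Wright_half_coeff b n = (-1) ^ n / fact n * rGamma (real n * (-1/2) + b)"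

lemma Wright_half_powser: "Wright (-x) (-1/2) b = (\<Sum>n. Wright_half_coeff b n * x ^ n)"
proof -
  have "(-x) ^ n / fact n * r = (-1) ^ n / fact n * r * x ^ n" for n and r :: real
    by (subst power_minus) (simp add: mult_ac)
  then show ?thesis unfolding Wright_def Wright_half_coeff_def by presburger
qed

lemma summable_Wright_half_powser:
  assumes "1/2 \<le> b" "b \<le> 1"
  shows "summable (\<lambda>n. Wright_half_coeff b n * x ^ n)"
proof -
  obtain C where C: "C \<ge> 0" "\<forall>y\<in>{0..1::real}. \<bar>rGamma y\<bar> \<le> C"
    using rGamma_bounded_on_unit_interval by blast
  have "(-x, -1/2, b) \<in> Wright_domain \<bar>x\<bar>" using assms by (auto simp: Wright_domain_def)
  from Wright_term_bound[OF C this]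
  have "norm (Wright_half_coeff b n * x ^ n) \<le> C * (\<bar>x\<bar> ^ n / sqrt (fact n))" for n
    by (simp add: Wright_half_coeff_def power_minus[of x] abs_mult mult_ac)
  then show ?thesis
    by (rule summable_comparison_test'[OF summable_mult[OF summable_power_div_sqrt_fact]])
qed

lemma Mainardi_half_powser: "Mainardi (1/2) x = (\<Sum>n. Wright_half_coeff (1/2) n * x ^ n)"
  using Wright_half_powser[of x "1/2"] by (simp add: Mainardi_def)

lemma diffs_Wright_half_coeff: "diffs (Wright_half_coeff 1) = (\<lambda>n. - Wright_half_coeff (1/2) n)"
proof
  fix n
  have arg: "real (Suc n) * (-1/2) + 1 = real n * (-1/2) + 1/2" by (simp add: field_simps)
  have "real (Suc n) * ((-1) ^ Suc n / fact (Suc n)) = - ((-1) ^ n / (fact n :: real))"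
    by (simp add: divide_simps del: of_nat_Suc)
  then show "diffs (Wright_half_coeff 1) n = - Wright_half_coeff (1/2) n"
    unfolding diffs_def Wright_half_coeff_def arg by (simp only: mult.assoc[symmetric] of_nat_id)
qed

lemma has_real_derivative_Wright_half:
  "((\<lambda>x. Wright (-x) (-1/2) 1) has_real_derivative - Mainardi (1/2) x) (at x)"
proof -
  have "((\<lambda>x. \<Sum>n. Wright_half_coeff 1 n * x ^ n) has_real_derivative
          (\<Sum>n. diffs (Wright_half_coeff 1) n * x ^ n)) (at x)"
    by (rule termdiffs_strong_converges_everywhere) (rule summable_Wright_half_powser, auto)
  moreover have "(\<Sum>n. diffs (Wright_half_coeff 1) n * x ^ n) = - Mainardi (1/2) x"
    unfolding diffs_Wright_half_coeff Mainardi_half_powser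
    by (simp add: suminf_minus[OF summable_Wright_half_powser])
  ultimately show ?thesis unfolding Wright_half_powser by simp
qed

lemma Wright_half_zero: "Wright 0 (-1/2) 1 = 1"
  using Wright_half_powser[of 0 1] powser_zero[of "Wright_half_coeff 1"]
  by (simp add: Wright_half_coeff_def rGamma_inverse_Gamma)

lemma rGamma_half_minus_nat:
  "rGamma (1/2 - real k) = (-1) ^ k * fact (2 * k) / (4 ^ k * fact k * sqrt pi)"
proof (induction k)
  case 0
  then show ?case by (simp add: rGamma_inverse_Gamma Gamma_one_half_real inverse_eq_divide)
next
  case (Suc k)
  have "(1/2 - y) * (s * F / (q * f * p)) = - s * (2 * y * (2 * y - 1) * F) / (4 * q * (y * f) * p)"
    if "y > 0" "q > 0" "f > 0" "p > 0" for y s F q f p :: real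
    using that by (simp add: field_simps)
  from this[of "real k + 1" "4 ^ k" "fact k" "sqrt pi" "(-1) ^ k" "fact (2 * k)"]
  show ?case
    using rGamma_plus1[of "1/2 - real (Suc k)"] by (simp add: Suc.IH algebra_simps)
qed

text \<open>Only the even terms survive: the odd ones contain \<open>rGamma\<close> at a non-positive integer.\<close>
lemma Mainardi_half: "Mainardi (1/2) x = exp (- (x\<^sup>2) / 4) / sqrt pi"
proof -
  have "(\<lambda>n. Wright_half_coeff (1/2) n * x ^ n) sums (exp (- (x\<^sup>2) / 4) / sqrt pi)"
  proof (subst sums_mono_reindex[of "\<lambda>k. 2 * k", symmetric])
    show "strict_mono (\<lambda>k::nat. 2 * k)" by (simp add: strict_mono_def)
  next
    fix n assume "n \<notin> range (\<lambda>k::nat. 2 * k)"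
    then have "odd n" by auto
    then obtain k where "n = 2 * k + 1" by (rule oddE)
    then have "real n * (-1/2) + 1/2 = - real k" by (simp add: field_simps)
    then show "Wright_half_coeff (1/2) n * x ^ n = 0"
      by (simp add: Wright_half_coeff_def rGamma_inverse_Gamma Gamma_eq_zero_iff)
  next
    have "Wright_half_coeff (1/2) (2 * k) * x ^ (2 * k) = (- (x\<^sup>2) / 4) ^ k /\<^sub>R fact k / sqrt pi" for k
    proof -
      have arg: "real (2 * k) * (-1/2) + 1/2 = 1/2 - real k" by simp
      have sign: "(-1::real) ^ (2 * k) = 1" by (simp add: power_mult)
      have "(- (x\<^sup>2) / 4) ^ k = ((-1) * x\<^sup>2 / 4) ^ k" by simp
      then have pow: "(- (x\<^sup>2) / 4) ^ k = (-1) ^ k * x ^ (2 * k) / 4 ^ k"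
        by (simp only: power_divide power_mult_distrib power_mult)
      have "1 / F * (s * F / (q * f * p)) * X = (s * X / q) / f / p"
        if "F > 0" "f > 0" "p > 0" "q > 0" for F f p q s X :: real
        using that by (simp add: field_simps)
      from this[of "fact (2 * k)" "fact k" "sqrt pi" "4 ^ k" "(-1) ^ k" "x ^ (2 * k)"]
      show ?thesis unfolding Wright_half_coeff_def arg rGamma_half_minus_nat sign pow
        by (simp add: inverse_eq_divide)
    qed
    then show "(\<lambda>k. Wright_half_coeff (1/2) (2 * k) * x ^ (2 * k)) sums (exp (- (x\<^sup>2) / 4) / sqrt pi)"
      using sums_divide[OF exp_converges[of "- (x\<^sup>2) / 4"], of "sqrt pi"] by simp
  qed
  then show ?thesis unfolding Mainardi_half_powser by (rule sums_unique[symmetric])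
qed

lemma has_real_derivative_Wright_half_double:
  "((\<lambda>x. 1 - Wright (- (2 * x)) (-1/2) 1) has_real_derivative 2 / sqrt pi * exp (- (x\<^sup>2))) (at x)"
proof -
  have "((\<lambda>x. 1 - Wright (- (2 * x)) (-1/2) 1) has_real_derivative
          (0 - (- Mainardi (1/2) (2 * x))) * 2) (at x)"
    by (rule DERIV_chain2[where g = "\<lambda>x. 2 * x", OF DERIV_diff[OF DERIV_const has_real_derivative_Wright_half]])
      (rule DERIV_cmult_Id)
  then show ?thesis by (simp add: Mainardi_half power_mult_distrib ac_simps)
qed

lemma erf_eq_Wright_half: "erf x = 1 - Wright (- (2 * x)) (-1/2) 1"
proof -
  define F where "F x = sqrt pi / 2 * (1 - Wright (- (2 * x)) (-1/2) 1)" for x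
  have F0: "F 0 = 0" using Wright_half_zero by (simp add: F_def)
  have "(F has_real_derivative exp (- (u\<^sup>2))) (at u)" for u
    using DERIV_cmult[OF has_real_derivative_Wright_half_double, of "sqrt pi / 2" u]
    by (simp add: F_def[abs_def])
  then have F': "(F has_vector_derivative exp (- (u\<^sup>2))) (at u within S)" for u S
    using has_real_derivative_iff_has_vector_derivative has_vector_derivative_at_within by blast
  show ?thesis
  proof (cases "0 \<le> x")
    case True
    from fundamental_theorem_of_calculus[OF True F'] F0
    have "integral {0..x} (\<lambda>u. exp (- (u\<^sup>2))) = F x" by (simp add: integral_unique)
    with True show ?thesis by (simp add: erf_def F_def field_simps)
  next
    case False
    from fundamental_theorem_of_calculus[of x 0, OF _ F'] False F0
    have "integral {x..0} (\<lambda>u. exp (- (u\<^sup>2))) = - F x" by (simp add: integral_unique)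
    with False show ?thesis by (simp add: erf_def F_def field_simps)
  qed
qed

lemma has_real_derivative_erf: "(erf has_real_derivative 2 / sqrt pi * exp (- (x\<^sup>2))) (at x)"
  using has_real_derivative_Wright_half_double by (simp add: erf_eq_Wright_half[abs_def])

lemma erf_strict_mono:
  assumes "a < b" shows "erf a < erf b"
proof (rule DERIV_pos_imp_increasing[OF assms])
  fix x
  show "\<exists>y. (erf has_real_derivative y) (at x) \<and> 0 < y"
    using has_real_derivative_erf by force
qed

lemma erf_pos: "x > 0 \<Longrightarrow> erf x > 0"
  using erf_strict_mono[of 0 x] Wright_half_zero by (simp add: erf_eq_Wright_half)

section \<open>Limits as \<open>\<alpha> \<rightarrow> 1\<^sup>-\<close>\<close>

lemma continuous_on_Wright_arg:
  assumes "-1/2 \<le> a" "a \<le> 0" "1/2 \<le> b" "b \<le> 1"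
  shows "continuous_on {-K..K} (\<lambda>x. Wright (- x) a b)"
proof -
  have "continuous_on {-K..K} (\<lambda>x. (\<lambda>(z, a, b). Wright z a b) (- x, a, b))"
    using assms by (intro continuous_on_compose2[OF continuous_on_Wright] continuous_intros)
      (auto simp: Wright_domain_def)
  then show ?thesis by simp
qed

lemma tendsto_Wright_at_left_1:
  assumes z: "(z \<longlongrightarrow> z0) (at_left 1)" and b: "(b \<longlongrightarrow> b0) (at_left 1)"
    and b_range: "\<And>\<alpha>. 0 < \<alpha> \<Longrightarrow> \<alpha> < 1 \<Longrightarrow> b \<alpha> \<in> {1/2..1}" "b0 \<in> {1/2..1}"
  shows "((\<lambda>\<alpha>. Wright (- z \<alpha>) (- \<alpha> / 2) (b \<alpha>)) \<longlongrightarrow> Wright (- z0) (- 1 / 2) b0) (at_left 1)"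
proof (rule tendsto_Wright[where K = "\<bar>z0\<bar> + 1"])
  show "((\<lambda>\<alpha>. - z \<alpha>) \<longlongrightarrow> - z0) (at_left 1)" by (intro tendsto_intros z)
  show "((\<lambda>\<alpha>::real. - \<alpha> / 2) \<longlongrightarrow> - 1 / 2) (at_left 1)"
    by (intro tendsto_intros tendsto_ident_at) simp
  have "eventually (\<lambda>\<alpha>. dist (z \<alpha>) z0 < 1) (at_left 1)"
    using tendstoD[OF z, of 1] by simp
  moreover have "eventually (\<lambda>\<alpha>. \<alpha> \<in> {0<..<1::real}) (at_left 1)"
    by (rule eventually_at_left_real) simp
  ultimately show "eventually (\<lambda>\<alpha>. (- z \<alpha>, - \<alpha> / 2, b \<alpha>) \<in> Wright_domain (\<bar>z0\<bar> + 1)) (at_left 1)"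
    by eventually_elim (use b_range in \<open>auto simp: Wright_domain_def dist_real_def\<close>)
qed (use b b_range in \<open>auto simp: Wright_domain_def\<close>)

lemma tendsto_one_minus_Wright_at_left_1:
  "(z \<longlongrightarrow> 2 * l) (at_left 1) \<Longrightarrow>
     ((\<lambda>\<alpha>. 1 - Wright (- z \<alpha>) (- \<alpha> / 2) 1) \<longlongrightarrow> erf l) (at_left 1)"
  using tendsto_diff[OF tendsto_const tendsto_Wright_at_left_1[OF _ tendsto_const]]
  by (simp add: erf_eq_Wright_half)

lemma tendsto_Mainardi_at_left_1:
  assumes "(z \<longlongrightarrow> z0) (at_left 1)"
  shows "((\<lambda>\<alpha>. Mainardi (\<alpha> / 2) (z \<alpha>)) \<longlongrightarrow> exp (- (z0\<^sup>2) / 4) / sqrt pi) (at_left 1)"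
proof -
  have "((\<lambda>\<alpha>. Wright (- z \<alpha>) (- \<alpha> / 2) (1 - \<alpha> / 2)) \<longlongrightarrow> Wright (- z0) (- 1 / 2) (1 - 1 / 2))
          (at_left 1)"
    by (intro tendsto_Wright_at_left_1 assms tendsto_intros tendsto_ident_at) auto
  then show ?thesis using Mainardi_half[of z0] by (simp add: Mainardi_def)
qed

text \<open>Uniform continuity of the Wright function on the compact set \<open>Wright_domain K\<close> lets the
  positive lower bound of \<open>Mainardi (1/2)\<close> on \<open>[-K, K]\<close> persist for \<open>\<alpha>\<close> close to 1.\<close>
lemma eventually_Mainardi_pos_at_left_1:
  "eventually (\<lambda>\<alpha>. \<forall>x\<in>{-K..K}. Mainardi (\<alpha> / 2) x > 0) (at_left 1)"
proof -
  define m where "m = exp (- (K\<^sup>2) / 4) / sqrt pi"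
  have "m > 0" by (simp add: m_def)
  have "compact (Wright_domain K)" unfolding Wright_domain_def by (intro compact_Times compact_Icc)
  then have "uniformly_continuous_on (Wright_domain K) (\<lambda>(z, a, b). Wright z a b)"
    by (intro compact_uniformly_continuous continuous_on_Wright)
  then obtain d where "d > 0" and d: "\<And>p q. p \<in> Wright_domain K \<Longrightarrow> q \<in> Wright_domain K \<Longrightarrow>
      dist q p < d \<Longrightarrow> dist ((\<lambda>(z, a, b). Wright z a b) q) ((\<lambda>(z, a, b). Wright z a b) p) < m"
    using \<open>m > 0\<close> unfolding uniformly_continuous_on_def by metis
  have "eventually (\<lambda>\<alpha>. \<alpha> \<in> {max 0 (1 - d)<..<1}) (at_left (1::real))"
    using \<open>d > 0\<close> by (intro eventually_at_left_real) auto
  then show ?thesis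
  proof eventually_elim
    case (elim \<alpha>)
    show ?case
    proof
      fix x assume x: "x \<in> {-K..K}"
      define p where "p = (- x, - (1/2) :: real, 1 - 1/2 :: real)"
      define q where "q = (- x, - (\<alpha> / 2), 1 - \<alpha> / 2)"
      have pq: "p \<in> Wright_domain K" "q \<in> Wright_domain K"
        using x elim by (auto simp: p_def q_def Wright_domain_def)
      have "dist q p = sqrt (2 * (1/2 - \<alpha> / 2)\<^sup>2)"
        by (simp add: p_def q_def dist_Pair_Pair dist_real_def power2_commute)
      also have "\<dots> \<le> 2 * \<bar>1/2 - \<alpha> / 2\<bar>"
        by (rule real_le_lsqrt) (auto simp: power_mult_distrib)
      also have "\<dots> < d" using elim by auto
      finally have "dist ((\<lambda>(z, a, b). Wright z a b) q) ((\<lambda>(z, a, b). Wright z a b) p) < m"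
        by (rule d[OF pq])
      then have "\<bar>Mainardi (\<alpha> / 2) x - Mainardi (1/2) x\<bar> < m"
        by (simp add: p_def q_def Mainardi_def dist_real_def)
      moreover have "m \<le> Mainardi (1/2) x"
        using x unfolding Mainardi_half m_def
        by (intro divide_right_mono) (auto simp: abs_le_square_iff[symmetric])
      ultimately show "Mainardi (\<alpha> / 2) x > 0" by linarith
    qed
  qed
qed

lemma tendsto_Gamma_one_minus_half_at_left_1:
  "((\<lambda>\<alpha>. Gamma (1 - \<alpha> / 2)) \<longlongrightarrow> sqrt pi) (at_left (1::real))"
proof -
  have "((\<lambda>\<alpha>. Gamma (1 - \<alpha> / 2)) \<longlongrightarrow> Gamma (1 - 1 / 2)) (at_left (1::real))"
    by (intro tendsto_intros tendsto_ident_at) auto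
  then show ?thesis by (simp add: Gamma_one_half_real)
qed

lemma tendsto_Gamma_ratio_at_left_1:
  assumes "b \<noteq> 0"
  shows "((\<lambda>\<alpha>. a * Gamma (1 - \<alpha> / 2) / (b * Gamma (1 + \<alpha> / 2))) \<longlongrightarrow> 2 * a / b) (at_left (1::real))"
proof -
  have "((\<lambda>\<alpha>. 1 + \<alpha> / 2) \<longlongrightarrow> 1/2 + 1) (at_left (1::real))"
    by (intro tendsto_eq_intros tendsto_ident_at) auto
  then have "((\<lambda>\<alpha>. Gamma (1 + \<alpha> / 2)) \<longlongrightarrow> Gamma (1/2 + 1)) (at_left (1::real))"
    by (rule tendsto_Gamma) auto
  moreover have "Gamma (1/2 + 1 :: real) = sqrt pi / 2"
    by (subst Gamma_plus1) (auto simp: Gamma_one_half_real)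
  ultimately have "((\<lambda>\<alpha>. Gamma (1 + \<alpha> / 2)) \<longlongrightarrow> sqrt pi / 2) (at_left (1::real))"
    by (simp only:)
  then have "((\<lambda>\<alpha>. a * Gamma (1 - \<alpha> / 2) / (b * Gamma (1 + \<alpha> / 2)))
      \<longlongrightarrow> a * sqrt pi / (b * (sqrt pi / 2))) (at_left (1::real))"
    using assms by (intro tendsto_intros tendsto_Gamma_one_minus_half_at_left_1) auto
  then show ?thesis using assms by (simp add: mult.commute)
qed

lemma tendsto_powr_half_at_left_1:
  assumes "t > 0"
  shows "((\<lambda>\<alpha>. t powr (\<alpha> / 2)) \<longlongrightarrow> sqrt t) (at_left (1::real))"
proof -
  have "((\<lambda>\<alpha>. t powr (\<alpha> / 2)) \<longlongrightarrow> t powr (1 / 2)) (at_left (1::real))"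
    using assms by (intro tendsto_intros tendsto_ident_at) auto
  then show ?thesis using assms by (simp add: powr_half_sqrt)
qed

text \<open>Intermediate value theorem on shrinking intervals around \<open>r\<close>.\<close>
lemma tendsto_unique_zeros:
  fixes G :: "'a \<Rightarrow> real \<Rightarrow> real"
  assumes lim: "\<And>x. ((\<lambda>\<alpha>. G \<alpha> x) \<longlongrightarrow> g x) F"
    and "a < r" and neg: "\<And>x. a < x \<Longrightarrow> x < r \<Longrightarrow> g x < 0" and pos: "\<And>x. r < x \<Longrightarrow> g x > 0"
    and zeros: "\<And>x1 x2. a < x1 \<Longrightarrow> x1 < r \<Longrightarrow> r < x2 \<Longrightarrow>
       eventually (\<lambda>\<alpha>. continuous_on {x1..x2} (G \<alpha>) \<and> (\<forall>y\<in>{x1..x2}. G \<alpha> y = 0 \<longrightarrow> y = \<xi> \<alpha>)) F"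
  shows "(\<xi> \<longlongrightarrow> r) F"
proof (rule tendstoI)
  fix e :: real assume "e > 0"
  define x1 where "x1 = max (r - e / 2) ((a + r) / 2)"
  define x2 where "x2 = r + e / 2"
  have x: "a < x1" "x1 < r" "r < x2" using \<open>a < r\<close> \<open>e > 0\<close> by (auto simp: x1_def x2_def max_def)
  have "eventually (\<lambda>\<alpha>. G \<alpha> x1 < 0) F" using order_tendstoD(2)[OF lim neg[OF x(1,2)]] .
  moreover have "eventually (\<lambda>\<alpha>. G \<alpha> x2 > 0) F" using order_tendstoD(1)[OF lim pos[OF x(3)]] .
  ultimately show "eventually (\<lambda>\<alpha>. dist (\<xi> \<alpha>) r < e) F"
    using zeros[OF x]
  proof eventually_elim
    case (elim \<alpha>)
    then obtain y where "x1 \<le> y" "y \<le> x2" "G \<alpha> y = 0"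
      using IVT'[of "G \<alpha>" x1 0 x2] x by auto
    with elim have "\<xi> \<alpha> \<in> {x1..x2}" by auto
    then show ?case using \<open>e > 0\<close> by (auto simp: dist_real_def x1_def x2_def)
  qed
qed

lemma tendsto_Wright_root_at_left_1:
  assumes R: "(R \<longlongrightarrow> R_lim) (at_left 1)" "R_lim > 0"
    and r: "r > 0" "r * erf (r / 2) = R_lim * (exp (- (r\<^sup>2) / 4) / sqrt pi)"
    and unique: "\<And>\<alpha> y. 0 < \<alpha> \<Longrightarrow> \<alpha> < 1 \<Longrightarrow> y > 0 \<Longrightarrow>
       y * (1 - Wright (- y) (- \<alpha> / 2) 1) / Mainardi (\<alpha> / 2) y = R \<alpha> \<Longrightarrow> y = \<xi> \<alpha>"
  shows "(\<xi> \<longlongrightarrow> r) (at_left 1)"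
proof (rule tendsto_unique_zeros[where a = 0 and
      G = "\<lambda>\<alpha> x. x * (1 - Wright (- x) (- \<alpha> / 2) 1) - R \<alpha> * Mainardi (\<alpha> / 2) x" and
      g = "\<lambda>x. x * erf (x / 2) - R_lim * (exp (- (x\<^sup>2) / 4) / sqrt pi)"])
  show "((\<lambda>\<alpha>. x * (1 - Wright (- x) (- \<alpha> / 2) 1) - R \<alpha> * Mainardi (\<alpha> / 2) x)
          \<longlongrightarrow> x * erf (x / 2) - R_lim * (exp (- (x\<^sup>2) / 4) / sqrt pi)) (at_left 1)" for x
    by (intro tendsto_intros tendsto_one_minus_Wright_at_left_1 tendsto_Mainardi_at_left_1 R(1)) simp
  have mono: "x * erf (x / 2) - R_lim * (exp (- (x\<^sup>2) / 4) / sqrt pi)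
      < y * erf (y / 2) - R_lim * (exp (- (y\<^sup>2) / 4) / sqrt pi)" if "0 < x" "x < y" for x y
  proof -
    have "x * erf (x / 2) < y * erf (y / 2)"
      using that erf_pos[of "x / 2"] erf_strict_mono[of "x / 2" "y / 2"]
      by (intro mult_strict_mono) auto
    moreover have "exp (- (y\<^sup>2) / 4) < exp (- (x\<^sup>2) / 4)"
      using that by (simp add: power_strict_mono)
    ultimately show ?thesis
      using \<open>R_lim > 0\<close> by (smt (verit) divide_strict_right_mono mult_strict_left_mono pi_gt_zero real_sqrt_gt_zero)
  qed
  show "x * erf (x / 2) - R_lim * (exp (- (x\<^sup>2) / 4) / sqrt pi) < 0" if "0 < x" "x < r" for x
    using mono[OF that] r(2) by simp
  show "x * erf (x / 2) - R_lim * (exp (- (x\<^sup>2) / 4) / sqrt pi) > 0" if "r < x" for x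
    using mono[OF r(1) that] r(2) by simp
  show "eventually (\<lambda>\<alpha>. continuous_on {x1..x2}
          (\<lambda>x. x * (1 - Wright (- x) (- \<alpha> / 2) 1) - R \<alpha> * Mainardi (\<alpha> / 2) x) \<and>
        (\<forall>y\<in>{x1..x2}. y * (1 - Wright (- y) (- \<alpha> / 2) 1) - R \<alpha> * Mainardi (\<alpha> / 2) y = 0
          \<longrightarrow> y = \<xi> \<alpha>)) (at_left 1)" if "0 < x1" "x1 < r" "r < x2" for x1 x2
  proof -
    have "eventually (\<lambda>\<alpha>. \<alpha> \<in> {0<..<1::real}) (at_left 1)"
      by (rule eventually_at_left_real) simp
    with eventually_Mainardi_pos_at_left_1[of x2] show ?thesis
    proof eventually_elim
      case (elim \<alpha>)
      have sub: "{x1..x2} \<subseteq> {-x2..x2}" using that by auto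
      have "continuous_on {x1..x2} (\<lambda>x. Wright (- x) (- \<alpha> / 2) b)" if "b \<in> {1/2..1}" for b
        using elim that by (intro continuous_on_subset[OF continuous_on_Wright_arg sub]) auto
      from this[of 1] this[of "1 - \<alpha> / 2"] elim
      have "continuous_on {x1..x2} (\<lambda>x. x * (1 - Wright (- x) (- \<alpha> / 2) 1) - R \<alpha> * Mainardi (\<alpha> / 2) x)"
        by (auto simp: Mainardi_def intro!: continuous_intros)
      moreover have "y = \<xi> \<alpha>"
        if "y \<in> {x1..x2}" "y * (1 - Wright (- y) (- \<alpha> / 2) 1) - R \<alpha> * Mainardi (\<alpha> / 2) y = 0" for y
      proof -
        have "Mainardi (\<alpha> / 2) y > 0" using elim that(1) sub by auto
        then show ?thesis
          using unique[of \<alpha> y] elim that \<open>0 < x1\<close> by (auto simp: field_simps)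
      qed
      ultimately show ?case by blast
    qed
  qed
qed (use r in simp)

theorem theorem7:
  fixes rho c L q\<^sub>0 T\<^sub>0 T\<^sub>m \<mu> :: real and \<xi> :: "real \<Rightarrow> real"
  assumes pos: "rho > 0" "c > 0" "L > 0" "q\<^sub>0 > 0" and temp: "T\<^sub>0 > T\<^sub>m"
    and xi: "\<And>\<alpha>. 0 < \<alpha> \<Longrightarrow> \<alpha> < 1 \<Longrightarrow>
       \<xi> \<alpha> > 0 \<and>
       \<xi> \<alpha> * (1 - Wright (- \<xi> \<alpha>) (- \<alpha> / 2) 1) / Mainardi (\<alpha> / 2) (\<xi> \<alpha>)
         = c * (T\<^sub>0 - T\<^sub>m) * Gamma (1 - \<alpha> / 2) / (L * Gamma (1 + \<alpha> / 2)) \<and>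
       (\<forall>y>0. y * (1 - Wright (- y) (- \<alpha> / 2) 1) / Mainardi (\<alpha> / 2) y
         = c * (T\<^sub>0 - T\<^sub>m) * Gamma (1 - \<alpha> / 2) / (L * Gamma (1 + \<alpha> / 2)) \<longrightarrow> y = \<xi> \<alpha>)"
    and mu: "\<mu> > 0 \<and> \<mu> * exp (\<mu>\<^sup>2) * erf \<mu> = c * (T\<^sub>0 - T\<^sub>m) / (L * sqrt pi) \<and>
       (\<forall>y>0. y * exp (y\<^sup>2) * erf y = c * (T\<^sub>0 - T\<^sub>m) / (L * sqrt pi) \<longrightarrow> y = \<mu>)"
    and lam_def: "\<And>\<alpha>. lam \<alpha> = q\<^sub>0 * Gamma (1 - \<alpha> / 2) / (rho * c * (T\<^sub>0 - T\<^sub>m))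
                    * (1 - Wright (- \<xi> \<alpha>) (- \<alpha> / 2) 1)"
    and lam1_def: "lam1 = q\<^sub>0 / (rho * L) * exp (- (\<mu>\<^sup>2)) / \<mu>"
  shows "((\<lambda>\<alpha>. q\<^sub>0\<^sup>2 * (Gamma (1 - \<alpha> / 2))\<^sup>2 / (rho * c * (T\<^sub>0 - T\<^sub>m)\<^sup>2)
                    * (1 - Wright (- \<xi> \<alpha>) (- \<alpha> / 2) 1)\<^sup>2)
           \<longlongrightarrow> pi * q\<^sub>0\<^sup>2 / (rho * c * (T\<^sub>0 - T\<^sub>m)\<^sup>2) * (erf \<mu>)\<^sup>2) (at_left 1)
     \<and> (\<forall>t>0. ((\<lambda>\<alpha>. lam \<alpha> * \<xi> \<alpha> * t powr (\<alpha> / 2))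
           \<longlongrightarrow> 2 * lam1 * \<mu> * sqrt t) (at_left 1))
     \<and> (\<forall>t>0. \<forall>x\<ge>0. ((\<lambda>\<alpha>. T\<^sub>0 - (T\<^sub>0 - T\<^sub>m) / (1 - Wright (- \<xi> \<alpha>) (- \<alpha> / 2) 1)
                    * (1 - Wright (- (x / (lam \<alpha> * t powr (\<alpha> / 2)))) (- \<alpha> / 2) 1))
           \<longlongrightarrow> T\<^sub>0 - (T\<^sub>0 - T\<^sub>m) / erf \<mu> * erf (x / (2 * lam1 * sqrt t))) (at_left 1))"
proof -
  have "T\<^sub>0 - T\<^sub>m > 0" using temp by simp
  have "\<mu> > 0" and mu_eq: "\<mu> * exp (\<mu>\<^sup>2) * erf \<mu> = c * (T\<^sub>0 - T\<^sub>m) / (L * sqrt pi)"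
    using mu by auto
  have "erf \<mu> > 0" using erf_pos[OF \<open>\<mu> > 0\<close>] .
  have xi_lim: "(\<xi> \<longlongrightarrow> 2 * \<mu>) (at_left 1)"
  proof (rule tendsto_Wright_root_at_left_1[where R_lim = "2 * (c * (T\<^sub>0 - T\<^sub>m)) / L"])
    show "((\<lambda>\<alpha>. c * (T\<^sub>0 - T\<^sub>m) * Gamma (1 - \<alpha> / 2) / (L * Gamma (1 + \<alpha> / 2)))
            \<longlongrightarrow> 2 * (c * (T\<^sub>0 - T\<^sub>m)) / L) (at_left 1)"
      using pos by (intro tendsto_Gamma_ratio_at_left_1) simp
    show "2 * \<mu> * erf (2 * \<mu> / 2) = 2 * (c * (T\<^sub>0 - T\<^sub>m)) / L * (exp (- ((2 * \<mu>)\<^sup>2) / 4) / sqrt pi)"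
      using mu_eq \<open>\<mu> > 0\<close> pos by (simp add: power_mult_distrib exp_minus field_simps)
  qed (use xi pos \<open>\<mu> > 0\<close> \<open>T\<^sub>0 - T\<^sub>m > 0\<close> in auto)
  have W_lim: "((\<lambda>\<alpha>. 1 - Wright (- \<xi> \<alpha>) (- \<alpha> / 2) 1) \<longlongrightarrow> erf \<mu>) (at_left 1)"
    using tendsto_one_minus_Wright_at_left_1[OF xi_lim] .
  have erf_mu: "erf \<mu> = c * (T\<^sub>0 - T\<^sub>m) / (L * sqrt pi * \<mu> * exp (\<mu>\<^sup>2))"
    using mu_eq \<open>\<mu> > 0\<close> pos by (simp add: field_simps)
  have lam1_eq: "lam1 = q\<^sub>0 * sqrt pi / (rho * c * (T\<^sub>0 - T\<^sub>m)) * erf \<mu>"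
    unfolding lam1_def erf_mu using \<open>\<mu> > 0\<close> pos \<open>T\<^sub>0 - T\<^sub>m > 0\<close>
    by (simp add: exp_minus field_simps)
  have "lam1 > 0" using lam1_def pos \<open>\<mu> > 0\<close> by simp
  have lam_lim: "(lam \<longlongrightarrow> lam1) (at_left 1)"
    unfolding lam_def[abs_def] lam1_eq using pos \<open>T\<^sub>0 - T\<^sub>m > 0\<close>
    by (intro tendsto_intros tendsto_Gamma_one_minus_half_at_left_1 W_lim) auto
  show ?thesis
  proof (intro conjI allI impI)
    have "((\<lambda>\<alpha>. q\<^sub>0\<^sup>2 * (Gamma (1 - \<alpha> / 2))\<^sup>2 / (rho * c * (T\<^sub>0 - T\<^sub>m)\<^sup>2)
                    * (1 - Wright (- \<xi> \<alpha>) (- \<alpha> / 2) 1)\<^sup>2)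
           \<longlongrightarrow> q\<^sub>0\<^sup>2 * (sqrt pi)\<^sup>2 / (rho * c * (T\<^sub>0 - T\<^sub>m)\<^sup>2) * (erf \<mu>)\<^sup>2) (at_left 1)"
      using pos temp by (intro tendsto_intros tendsto_Gamma_one_minus_half_at_left_1 W_lim) auto
    then show "((\<lambda>\<alpha>. q\<^sub>0\<^sup>2 * (Gamma (1 - \<alpha> / 2))\<^sup>2 / (rho * c * (T\<^sub>0 - T\<^sub>m)\<^sup>2)
                    * (1 - Wright (- \<xi> \<alpha>) (- \<alpha> / 2) 1)\<^sup>2)
           \<longlongrightarrow> pi * q\<^sub>0\<^sup>2 / (rho * c * (T\<^sub>0 - T\<^sub>m)\<^sup>2) * (erf \<mu>)\<^sup>2) (at_left 1)"
      by (simp add: mult.commute)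
  next
    fix t :: real assume "t > 0"
    show "((\<lambda>\<alpha>. lam \<alpha> * \<xi> \<alpha> * t powr (\<alpha> / 2)) \<longlongrightarrow> 2 * lam1 * \<mu> * sqrt t) (at_left 1)"
      using tendsto_mult[OF tendsto_mult[OF lam_lim xi_lim] tendsto_powr_half_at_left_1[OF \<open>t > 0\<close>]]
      by (simp add: mult_ac)
  next
    fix t x :: real assume "t > 0" "x \<ge> 0"
    have "((\<lambda>\<alpha>. x / (lam \<alpha> * t powr (\<alpha> / 2))) \<longlongrightarrow> 2 * (x / (2 * lam1 * sqrt t))) (at_left 1)"
      using tendsto_divide[OF tendsto_const[of x]
          tendsto_mult[OF lam_lim tendsto_powr_half_at_left_1[OF \<open>t > 0\<close>]]] \<open>lam1 > 0\<close> \<open>t > 0\<close>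
      by simp
    from tendsto_one_minus_Wright_at_left_1[OF this] \<open>erf \<mu> > 0\<close>
    show "((\<lambda>\<alpha>. T\<^sub>0 - (T\<^sub>0 - T\<^sub>m) / (1 - Wright (- \<xi> \<alpha>) (- \<alpha> / 2) 1)
                    * (1 - Wright (- (x / (lam \<alpha> * t powr (\<alpha> / 2)))) (- \<alpha> / 2) 1))
           \<longlongrightarrow> T\<^sub>0 - (T\<^sub>0 - T\<^sub>m) / erf \<mu> * erf (x / (2 * lam1 * sqrt t))) (at_left 1)"
      by (intro tendsto_intros W_lim) auto
  qed
qed

end
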